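(* Let $\mathcal{A}\subset\mathbb{R}^n$ be a nonempty compact set, $\Xi\subseteq\mathbb{R}^n$, $V:\mathbb{R}^n\to\mathbb{R}_+$ and $\Psi:\mathbb{R}^n\rightrightarrows\mathbb{R}^n$, and assume one of the following two settings holds: (i) $\Xi$ is nonempty, closed and convex, $\mathcal{A}$ is convex, and $V(y)=\tfrac12\|y-\mathbf{P}_{\mathcal{A}}(y)\|^2$; (ii) $\Xi=\mathbb{R}^n$ and $V$ is continuously differentiable with locally Lipschitz gradient, positive definite and radially unbounded with respect to $\mathcal{A}$. Assume $\Psi$ is SPSP with respect to $V$ on $\Xi$, and that for every $\sigma>0$ there exists $B>0$ such that $\|s\|\le B$ for all $y\in\Xi\cap\bar B_\sigma(\mathcal{A})$ and all $s\in\Psi(y)$. Then $\mathcal{A}$ is SPAS for the iterative method $y^+=\mathbf{P}_\Xi[y-\alpha s]$, $s\in\Psi(y)$, with parameter $\alpha>0$.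
   Context: $\|\cdot\|$ is Euclidean; $\mathbf{P}_S$ is the orthogonal projection onto a nonempty closed convex set $S$. For compact $S$ and $r>0$: $\bar B_r(S)=\{x:\|x-\mathbf{P}_S(x)\|\le r\}$, $B_r(S)=\{x:\|x-\mathbf{P}_S(x)\|<r\}$ (distance to $S$). A function $V$ is positive definite w.r.t. a closed set $S$ if $V=0$ on $S$ and $V>0$ off $S$; it is radially unbounded w.r.t. $S$ (on a set $\Xi$) if for every $B\in\mathbb{R}$ there is $r>0$ with $V(x)>B$ for all $x$ (in $\Xi$) outside $\bar B_r(S)$. SPSP: Let $V:\mathbb{R}^n\to\mathbb{R}_+$ be differentiable, positive definite and radially unbounded w.r.t. compact $\mathcal{A}$, and let $\Xi$ strictly contain $\mathcal{A}$ (every point of $\mathcal{A}$ has an open ball around it contained in $\Xi$). $\Psi$ is semiglobally, practically, strictly pseudogradient (SPSP) w.r.t. $V$ on $\Xi$ if there exist $\epsilon\ge0$, $b\ge0$ such that $\nabla V(y)^Ts\ge -b$ for all $y\in\Xi\cap\bar B_\epsilon(\mathcal{A})$, $s\in\Psi(y)$, and for every $\sigma>\epsilon$ there is a continuous $\phi_{\sigma,\epsilon}:\mathbb{R}^n\to\mathbb{R}$, positive on $\Xi\cap(\bar B_\sigma(\mathcal{A})\setminus B_\epsilon(\mathcal{A}))$ and radially unbounded w.r.t. $\mathcal{A}$ on $\Xi$, with $\nabla V(y)^Ts\ge\phi_{\sigma,\epsilon}(y)$ for all $y\in\Xi\cap(\bar B_\sigma(\mathcal{A})\setminus B_\epsilon(\mathcal{A}))$,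 $s\in\Psi(y)$. SPAS (for the iteration with parameter $\alpha$; statements below concern every sequence $(y(t))_{t\in\mathbb{N}}$ with $y(0)\in\Xi$, $y(t+1)=\mathbf{P}_\Xi[y(t)-\alpha s(t)]$, $s(t)\in\Psi(y(t))$): $\mathcal{A}$ is practically stable if for some $\check\rho_s>0$ and every $\rho_s>\check\rho_s$ there exist $\delta>0$ and a nonempty set $P_s\subset(0,\infty)$ such that whenever $\alpha\in P_s$ and $y(0)\in\bar B_\delta(\mathcal{A})\cap\Xi$, $y(t)\in\bar B_{\rho_s}(\mathcal{A})\cap\Xi$ for all $t$. A compact $S$ is uniformly attractive on compact $\Omega$ if for every $\varepsilon>0$ with $\bar B_\varepsilon(S)\cap\Xi\subset\Omega\cap\Xi$ there is $T\in\mathbb{N}$ such that $y(t)\in\bar B_\varepsilon(S)$ whenever $y(0)\in\Omega$ and $t\ge T$. $\mathcal{A}$ is semiglobally practically attractive if for some $\check\rho_a>0$ and all $\sigma>\rho_a>\check\rho_a$ there is a nonempty $P_a\subset(0,\infty)$ such that whenever $\alpha\in P_a$, $\bar B_{\rho_a}(\mathcal{A})$ is uniformly attractive on $\bar B_\sigma(\mathcal{A})$. $\mathcal{A}$ is SPAS (semiglobally practically asymptotically stable) if it is practically stable and semiglobally practically attractive. *)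

theory Defs
  imports "HOL-Analysis.Analysis"
begin

definition cballS :: "real \<Rightarrow> 'a::euclidean_space set \<Rightarrow> 'a set" where
  "cballS r S = {x. infdist x S \<le> r}"

definition ballS :: "real \<Rightarrow> 'a::euclidean_space set \<Rightarrow> 'a set" where
  "ballS r S = {x. infdist x S < r}"

definition pos_def_wrt :: "('a::euclidean_space \<Rightarrow> real) \<Rightarrow> 'a set \<Rightarrow> bool" where
  "pos_def_wrt V S \<longleftrightarrow> (\<forall>x\<in>S. V x = 0) \<and> (\<forall>x. x \<notin> S \<longrightarrow> V x > 0)"

definition rad_unb_on :: "('a::euclidean_space \<Rightarrow> real) \<Rightarrow> 'a set \<Rightarrow> 'a set \<Rightarrow> bool" where
  "rad_unb_on V S Xi \<longleftrightarrow> (\<forall>B. \<exists>r>0. \<forall>x\<in>Xi. x \<notin> cballS r S \<longrightarrow> V x > B)"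

definition strictly_contains :: "'a::euclidean_space set \<Rightarrow> 'a set \<Rightarrow> bool" where
  "strictly_contains Xi A \<longleftrightarrow> (\<forall>a\<in>A. \<exists>e>0. ball a e \<subseteq> Xi)"

definition dV :: "('a::euclidean_space \<Rightarrow> real) \<Rightarrow> 'a \<Rightarrow> 'a \<Rightarrow> real" where
  "dV V y s = frechet_derivative V (at y) s"

definition SPSP :: "('a::euclidean_space \<Rightarrow> 'a set) \<Rightarrow> ('a \<Rightarrow> real) \<Rightarrow> 'a set \<Rightarrow> 'a set \<Rightarrow> bool" where
  "SPSP Psi V A Xi \<longleftrightarrow>
     (\<forall>y. V differentiable (at y)) \<and> (\<forall>y. V y \<ge> 0) \<and> pos_def_wrt V A \<and> rad_unb_on V A UNIV \<and>
     compact A \<and> strictly_contains Xi A \<and>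
     (\<exists>\<epsilon>\<ge>0. \<exists>b\<ge>0.
        (\<forall>y\<in>Xi \<inter> cballS \<epsilon> A. \<forall>s\<in>Psi y. dV V y s \<ge> - b) \<and>
        (\<forall>\<sigma>>\<epsilon>. \<exists>\<phi>::'a \<Rightarrow> real. continuous_on UNIV \<phi> \<and>
            (\<forall>y\<in>Xi \<inter> (cballS \<sigma> A - ballS \<epsilon> A). \<phi> y > 0) \<and>
            rad_unb_on \<phi> A Xi \<and>
            (\<forall>y\<in>Xi \<inter> (cballS \<sigma> A - ballS \<epsilon> A). \<forall>s\<in>Psi y. dV V y s \<ge> \<phi> y)))"

definition is_traj :: "'a::euclidean_space set \<Rightarrow> ('a \<Rightarrow> 'a set) \<Rightarrow> real \<Rightarrow> (nat \<Rightarrow> 'a) \<Rightarrow> bool" where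
  "is_traj Xi Psi \<alpha> y \<longleftrightarrow> y 0 \<in> Xi \<and>
     (\<exists>s. \<forall>t. s t \<in> Psi (y t) \<and> y (Suc t) = closest_point Xi (y t - \<alpha> *\<^sub>R s t))"

definition practically_stable :: "'a::euclidean_space set \<Rightarrow> ('a \<Rightarrow> 'a set) \<Rightarrow> 'a set \<Rightarrow> bool" where
  "practically_stable Xi Psi A \<longleftrightarrow>
     (\<exists>\<rho>c>0. \<forall>\<rho>s>\<rho>c. \<exists>\<delta>>0. \<exists>Ps. Ps \<noteq> {} \<and> Ps \<subseteq> {0<..} \<and>
        (\<forall>\<alpha>\<in>Ps. \<forall>y. is_traj Xi Psi \<alpha> y \<and> y 0 \<in> cballS \<delta> A \<inter> Xi \<longrightarrow>
            (\<forall>t. y t \<in> cballS \<rho>s A \<inter> Xi)))"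

definition unif_attractive :: "'a::euclidean_space set \<Rightarrow> ('a \<Rightarrow> 'a set) \<Rightarrow> real \<Rightarrow> 'a set \<Rightarrow> 'a set \<Rightarrow> bool" where
  "unif_attractive Xi Psi \<alpha> S \<Omega> \<longleftrightarrow>
     (\<forall>\<epsilon>>0. cballS \<epsilon> S \<inter> Xi \<subseteq> \<Omega> \<inter> Xi \<longrightarrow>
        (\<exists>T::nat. \<forall>y. is_traj Xi Psi \<alpha> y \<and> y 0 \<in> \<Omega> \<longrightarrow> (\<forall>t\<ge>T. y t \<in> cballS \<epsilon> S)))"

definition semiglobally_practically_attractive :: "'a::euclidean_space set \<Rightarrow> ('a \<Rightarrow> 'a set) \<Rightarrow> 'a set \<Rightarrow> bool" where
  "semiglobally_practically_attractive Xi Psi A \<longleftrightarrow>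
     (\<exists>\<rho>c>0. \<forall>\<sigma> \<rho>a. \<sigma> > \<rho>a \<and> \<rho>a > \<rho>c \<longrightarrow>
        (\<exists>Pa. Pa \<noteq> {} \<and> Pa \<subseteq> {0<..} \<and>
           (\<forall>\<alpha>\<in>Pa. unif_attractive Xi Psi \<alpha> (cballS \<rho>a A) (cballS \<sigma> A))))"

definition SPAS :: "'a::euclidean_space set \<Rightarrow> ('a \<Rightarrow> 'a set) \<Rightarrow> 'a set \<Rightarrow> bool" where
  "SPAS Xi Psi A \<longleftrightarrow> practically_stable Xi Psi A \<and> semiglobally_practically_attractive Xi Psi A"

end

theory Submission
  imports Defs
begin

text \<open>Everything rests on a uniform first-order estimate
  \<open>V (P\<^sub>\<Xi> (y - \<alpha> s)) \<le> V y - \<alpha> (\<nabla>V(y)\<^sup>T s - \<theta>)\<close> for small steps of bounded length on bounded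
  parts of \<open>\<Xi>\<close>: in setting (i) it follows from the nonexpansiveness of \<open>P\<^sub>\<Xi>\<close> and \<open>A \<subseteq> \<Xi>\<close>, in
  setting (ii) from uniform continuity of the gradient on compact sets. Combined with SPSP and the bound
  on \<open>\<Psi>\<close>, it shows that on a sublevel set \<open>{V \<le> L}\<close> a fixed small step size makes every step either
  land in \<open>{V \<le> c}\<close>, with \<open>c\<close> independent of \<open>L\<close>, or decrease \<open>V\<close> by a fixed amount. Hence trajectories
  starting in \<open>{V \<le> L}\<close> stay there and enter \<open>{V \<le> c}\<close> after a number of steps independent of the
  initial point, and radial unboundedness turns sublevel sets of \<open>V\<close> into neighbourhoods of \<open>A\<close>.\<close>

lemma compact_cballS:
  fixes A :: "'a::euclidean_space set"
  assumes "A \<noteq> {}" "compact A" "0 < r"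
  shows "compact (cballS r A)"
  using compact_infdist_le[OF assms] unfolding cballS_def .

lemma cballS_mono: "r \<le> r' \<Longrightarrow> cballS r A \<subseteq> cballS r' A"
  unfolding cballS_def by auto

lemma compact_Int_cballS_diff_ballS:
  fixes A Xi :: "'a::euclidean_space set"
  assumes "closed Xi" "A \<noteq> {}" "compact A" "0 < \<sigma>"
  shows "compact (Xi \<inter> (cballS \<sigma> A - ballS \<epsilon> A))"
proof -
  have "Xi \<inter> (cballS \<sigma> A - ballS \<epsilon> A) = (Xi \<inter> {x. \<epsilon> \<le> infdist x A}) \<inter> cballS \<sigma> A"
    by (auto simp: ballS_def)
  moreover have "closed (Xi \<inter> {x. \<epsilon> \<le> infdist x A})"
    using assms(1) by (intro closed_Int closed_Collect_le continuous_intros)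
  ultimately show ?thesis
    using compact_cballS[OF assms(2-4)] by (simp add: closed_Int_compact)
qed

lemma continuous_pos_on_compact_bounded_below:
  fixes \<phi> :: "'a::topological_space \<Rightarrow> real"
  assumes "compact K" "continuous_on K \<phi>" "\<forall>y\<in>K. 0 < \<phi> y"
  shows "\<exists>m>0. \<forall>y\<in>K. m \<le> \<phi> y"
proof (cases "K = {}")
  case True
  then show ?thesis by (auto intro: exI[of _ 1])
next
  case False
  then obtain x where "x \<in> K" "\<forall>y\<in>K. \<phi> x \<le> \<phi> y"
    using continuous_attains_inf[OF assms(1) False assms(2)] by blast
  then show ?thesis
    using assms(3) by blast
qed

lemma continuous_bounded_above_on_cballS:
  fixes A :: "'a::euclidean_space set" and V :: "'a \<Rightarrow> real"
  assumes "continuous_on UNIV V" "A \<noteq> {}" "compact A" "0 < r"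
  obtains M where "\<forall>x\<in>cballS r A. V x \<le> M"
proof -
  have "bounded (V ` cballS r A)"
    by (intro compact_imp_bounded compact_continuous_image continuous_on_subset[OF assms(1)]
        compact_cballS assms(2-4)) simp
  then show ?thesis
    using that by (meson abs_le_D1 bounded_real imageI)
qed

lemma rad_unb_on_sublevel_subset_cballS:
  assumes "rad_unb_on V A UNIV"
  obtains r where "0 < r" "\<forall>x. V x \<le> c \<longrightarrow> x \<in> cballS r A"
  using assms that unfolding rad_unb_on_def by (meson UNIV_I not_le)

definition practical_descent ::
    "'a::euclidean_space set \<Rightarrow> ('a \<Rightarrow> 'a set) \<Rightarrow> ('a \<Rightarrow> real) \<Rightarrow> real \<Rightarrow> real \<Rightarrow> real \<Rightarrow> real \<Rightarrow> bool"
  where "practical_descent Xi Psi V c L \<alpha> \<kappa> \<longleftrightarrow>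
    (\<forall>y\<in>Xi. \<forall>s\<in>Psi y. V y \<le> L \<longrightarrow> V (closest_point Xi (y - \<alpha> *\<^sub>R s)) \<le> max c (V y - \<alpha> * \<kappa>))"

lemma practical_descent_mono_level:
  "practical_descent Xi Psi V c L \<alpha> \<kappa> \<Longrightarrow> c \<le> c' \<Longrightarrow> practical_descent Xi Psi V c' L \<alpha> \<kappa>"
  unfolding practical_descent_def by (meson max.mono order.trans order_refl)

lemma practical_descent_trajectory:
  assumes traj: "is_traj Xi Psi \<alpha> y" and Xi: "closed Xi" "Xi \<noteq> {}"
    and desc: "practical_descent Xi Psi V c L \<alpha> \<kappa>"
    and "c \<le> L" "V (y 0) \<le> L" "0 < \<alpha>" "0 < \<kappa>"
  shows "y t \<in> Xi \<and> V (y t) \<le> max c (V (y 0) - real t * \<alpha> * \<kappa>)"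
proof (induction t)
  case 0
  then show ?case
    using traj unfolding is_traj_def by auto
next
  case (Suc t)
  obtain s where s: "s t \<in> Psi (y t)" "y (Suc t) = closest_point Xi (y t - \<alpha> *\<^sub>R s t)"
    using traj unfolding is_traj_def by blast
  have "0 < \<alpha> * \<kappa>"
    using assms(7,8) by simp
  then have "V (y t) \<le> L"
    using Suc.IH assms(5,6) by (smt (verit) mult_nonneg_nonneg of_nat_0_le_iff mult.assoc)
  then have "V (y (Suc t)) \<le> max c (V (y t) - \<alpha> * \<kappa>)"
    using desc Suc.IH s unfolding practical_descent_def by simp
  also have "\<dots> \<le> max c (V (y 0) - real (Suc t) * \<alpha> * \<kappa>)"
  proof -
    have "real (Suc t) * \<alpha> * \<kappa> = real t * \<alpha> * \<kappa> + \<alpha> * \<kappa>"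
      by (simp add: algebra_simps)
    then show ?thesis
      using Suc.IH \<open>0 < \<alpha> * \<kappa>\<close> by (smt (verit))
  qed
  finally show ?case
    using s closest_point_in_set[OF Xi] by auto
qed

lemma practical_descent_eventually_below:
  assumes Xi: "closed Xi" "Xi \<noteq> {}" and desc: "practical_descent Xi Psi V c L \<alpha> \<kappa>"
    and "c \<le> L" "0 < \<alpha>" "0 < \<kappa>"
  obtains T :: nat where "\<And>y t. is_traj Xi Psi \<alpha> y \<Longrightarrow> V (y 0) \<le> L \<Longrightarrow> T \<le> t \<Longrightarrow> V (y t) \<le> c"
proof -
  obtain T :: nat where T: "(L - c) / (\<alpha> * \<kappa>) \<le> T"
    using real_arch_simple by blast
  have "V (y t) \<le> c" if traj: "is_traj Xi Psi \<alpha> y" and "V (y 0) \<le> L" "T \<le> t" for y t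
  proof -
    have "L - c \<le> real T * \<alpha> * \<kappa>"
      using T assms(5,6) by (simp add: divide_le_eq mult.assoc)
    also have "\<dots> \<le> real t * \<alpha> * \<kappa>"
      using that(3) assms(5,6) by (simp add: mult_right_mono)
    finally show ?thesis
      using practical_descent_trajectory[OF traj Xi desc assms(4) that(2) assms(5,6), of t] that(2)
      by linarith
  qed
  then show ?thesis
    using that by blast
qed

lemma SPAS_if_practical_descent:
  fixes A Xi :: "'a::euclidean_space set"
  assumes Xi: "closed Xi" "Xi \<noteq> {}" and A: "A \<noteq> {}" "compact A"
    and V: "continuous_on UNIV V" "rad_unb_on V A UNIV"
    and desc: "\<forall>L. \<exists>\<alpha>>0. \<exists>\<kappa>>0. practical_descent Xi Psi V c L \<alpha> \<kappa>"
  shows "SPAS Xi Psi A"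
proof -
  obtain M where M: "\<forall>x\<in>cballS 1 A. V x \<le> M"
    using continuous_bounded_above_on_cballS[OF V(1) A zero_less_one] by blast
  \<comment> \<open>enlarging \<open>c\<close> makes \<open>{V \<le> c'}\<close> contain \<open>cballS 1 A\<close>, which yields \<open>\<delta> = 1\<close> for stability\<close>
  define c' where "c' = max c M"
  have desc': "\<exists>\<alpha>>0. \<exists>\<kappa>>0. practical_descent Xi Psi V c' L \<alpha> \<kappa>" for L
    using desc practical_descent_mono_level[of Xi Psi V c L _ _ c'] unfolding c'_def by fastforce
  obtain r0 where r0: "0 < r0" "\<forall>x. V x \<le> c' \<longrightarrow> x \<in> cballS r0 A"
    using rad_unb_on_sublevel_subset_cballS[OF V(2)] by blast
  have "practically_stable Xi Psi A"
    unfolding practically_stable_def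
  proof (rule exI[of _ r0], intro conjI allI impI r0(1))
    fix \<rho>s assume "r0 < \<rho>s"
    obtain \<alpha> \<kappa> where \<alpha>\<kappa>: "0 < \<alpha>" "0 < \<kappa>" and step: "practical_descent Xi Psi V c' c' \<alpha> \<kappa>"
      using desc' by blast
    have "y t \<in> cballS \<rho>s A \<inter> Xi" if traj: "is_traj Xi Psi \<alpha> y" and "y 0 \<in> cballS 1 A \<inter> Xi" for y t
    proof -
      have "V (y 0) \<le> c'"
        using that(2) M unfolding c'_def by fastforce
      moreover have "0 \<le> real t * \<alpha> * \<kappa>"
        using \<alpha>\<kappa> by simp
      ultimately have "y t \<in> Xi" "V (y t) \<le> c'"
        using practical_descent_trajectory[OF traj Xi step order_refl _ \<alpha>\<kappa>, of t] by auto
      then show ?thesis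
        using r0(2) cballS_mono[of r0 \<rho>s A] \<open>r0 < \<rho>s\<close> by auto
    qed
    then show "\<exists>\<delta>>0. \<exists>Ps. Ps \<noteq> {} \<and> Ps \<subseteq> {0<..} \<and>
        (\<forall>\<alpha>\<in>Ps. \<forall>y. is_traj Xi Psi \<alpha> y \<and> y 0 \<in> cballS \<delta> A \<inter> Xi \<longrightarrow> (\<forall>t. y t \<in> cballS \<rho>s A \<inter> Xi))"
      using \<alpha>\<kappa> by (intro exI[of _ 1] exI[of _ "{\<alpha>}"]) auto
  qed
  moreover have "semiglobally_practically_attractive Xi Psi A"
    unfolding semiglobally_practically_attractive_def
  proof (rule exI[of _ r0], intro conjI allI impI r0(1))
    fix \<sigma> \<rho>a assume \<sigma>\<rho>a: "\<rho>a < \<sigma> \<and> r0 < \<rho>a"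
    obtain L\<sigma> where L\<sigma>: "\<forall>x\<in>cballS \<sigma> A. V x \<le> L\<sigma>"
      using continuous_bounded_above_on_cballS[OF V(1) A, of \<sigma>] \<sigma>\<rho>a r0(1) by auto
    define L where "L = max c' L\<sigma>"
    obtain \<alpha> \<kappa> where \<alpha>\<kappa>: "0 < \<alpha>" "0 < \<kappa>" and step: "practical_descent Xi Psi V c' L \<alpha> \<kappa>"
      using desc' by blast
    obtain T where T: "\<And>y t. is_traj Xi Psi \<alpha> y \<Longrightarrow> V (y 0) \<le> L \<Longrightarrow> T \<le> t \<Longrightarrow> V (y t) \<le> c'"
      using practical_descent_eventually_below[OF Xi step _ \<alpha>\<kappa>] unfolding L_def by auto
    have "y t \<in> cballS \<epsilon> (cballS \<rho>a A)"
      if "0 < \<epsilon>" "is_traj Xi Psi \<alpha> y" "y 0 \<in> cballS \<sigma> A" "T \<le> t" for \<epsilon> y t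
    proof -
      have "V (y t) \<le> c'"
        using T[OF that(2) _ that(4)] L\<sigma> that(3) unfolding L_def by fastforce
      then have "y t \<in> cballS \<rho>a A"
        using r0(2) cballS_mono[of r0 \<rho>a A] \<sigma>\<rho>a by auto
      then show ?thesis
        using that(1) unfolding cballS_def[of \<epsilon>] by simp
    qed
    then have "unif_attractive Xi Psi \<alpha> (cballS \<rho>a A) (cballS \<sigma> A)"
      unfolding unif_attractive_def by blast
    then show "\<exists>Pa. Pa \<noteq> {} \<and> Pa \<subseteq> {0<..} \<and> (\<forall>\<alpha>\<in>Pa. unif_attractive Xi Psi \<alpha> (cballS \<rho>a A) (cballS \<sigma> A))"
      using \<alpha>\<kappa> by (intro exI[of _ "{\<alpha>}"]) auto
  qed
  ultimately show ?thesis
    unfolding SPAS_def ..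
qed

definition uniform_projected_descent :: "'a::euclidean_space set \<Rightarrow> 'a set \<Rightarrow> ('a \<Rightarrow> real) \<Rightarrow> bool"
  where "uniform_projected_descent Xi A V \<longleftrightarrow>
    (\<forall>R B \<theta>. 0 < B \<longrightarrow> 0 < \<theta> \<longrightarrow> (\<exists>\<alpha>0>0. \<forall>y\<in>Xi \<inter> cballS R A. \<forall>s \<alpha>.
       norm s \<le> B \<longrightarrow> 0 < \<alpha> \<longrightarrow> \<alpha> \<le> \<alpha>0 \<longrightarrow>
       V (closest_point Xi (y - \<alpha> *\<^sub>R s)) \<le> V y - \<alpha> * (dV V y s - \<theta>)))"

lemma dV_uniform_lower_bound:
  fixes A Xi :: "'a::euclidean_space set" and \<phi> :: "'a \<Rightarrow> real"
  assumes "closed Xi" "A \<noteq> {}" "compact A" "0 < R" and \<phi>: "continuous_on UNIV \<phi>"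
    and \<phi>_pos: "\<forall>y\<in>Xi \<inter> (cballS R A - ballS \<epsilon> A). 0 < \<phi> y"
    and \<phi>_le: "\<forall>y\<in>Xi \<inter> (cballS R A - ballS \<epsilon> A). \<forall>s\<in>Psi y. \<phi> y \<le> dV V y s"
  obtains m where "0 < m" "\<forall>y\<in>Xi \<inter> (cballS R A - ballS \<epsilon> A). \<forall>s\<in>Psi y. m \<le> dV V y s"
proof -
  obtain m where "0 < m" "\<forall>y\<in>Xi \<inter> (cballS R A - ballS \<epsilon> A). m \<le> \<phi> y"
    using continuous_pos_on_compact_bounded_below[OF compact_Int_cballS_diff_ballS[OF assms(1-4)]
        continuous_on_subset[OF \<phi>] \<phi>_pos] by blast
  then show ?thesis
    using that \<phi>_le by force
qed

text \<open>Near \<open>A\<close> a step raises \<open>V\<close> by at most \<open>\<alpha> (b + m/2) \<le> 1/2\<close> above its bound \<open>M\<close> there;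
  away from \<open>A\<close> it lowers \<open>V\<close> by at least \<open>\<alpha> m/2\<close>.\<close>

lemma practical_descent_of_first_order_step:
  assumes step: "\<forall>y\<in>Xi. \<forall>s\<in>Psi y. V y \<le> L \<longrightarrow>
      V (closest_point Xi (y - \<alpha> *\<^sub>R s)) \<le> V y - \<alpha> * (dV V y s - m / 2)"
    and near: "\<forall>y\<in>Xi. \<forall>s\<in>Psi y. V y \<le> L \<longrightarrow> infdist y A \<le> \<epsilon> \<longrightarrow> - b \<le> dV V y s \<and> V y \<le> M"
    and far: "\<forall>y\<in>Xi. \<forall>s\<in>Psi y. V y \<le> L \<longrightarrow> \<epsilon> < infdist y A \<longrightarrow> m \<le> dV V y s"
    and \<alpha>: "0 < \<alpha>" "\<alpha> * (2 * b + m) \<le> 1"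
  shows "practical_descent Xi Psi V (M + 1/2) L \<alpha> (m / 2)"
  unfolding practical_descent_def
proof (intro ballI impI)
  fix y s assume y: "y \<in> Xi" "s \<in> Psi y" "V y \<le> L"
  then have next_le: "V (closest_point Xi (y - \<alpha> *\<^sub>R s)) \<le> V y - \<alpha> * (dV V y s - m / 2)"
    using step by blast
  show "V (closest_point Xi (y - \<alpha> *\<^sub>R s)) \<le> max (M + 1/2) (V y - \<alpha> * (m / 2))"
  proof (cases "infdist y A \<le> \<epsilon>")
    case True
    then have "- b \<le> dV V y s" "V y \<le> M"
      using near y by auto
    then have "V (closest_point Xi (y - \<alpha> *\<^sub>R s)) \<le> M + (\<alpha> * b + \<alpha> * (m / 2))"
      using next_le \<alpha>(1) by (smt (verit) mult_left_mono right_diff_distrib)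
    also have "\<dots> \<le> M + 1/2"
      using \<alpha>(2) by (simp add: algebra_simps)
    finally show ?thesis
      by simp
  next
    case False
    then have "\<alpha> * (m / 2) \<le> \<alpha> * (dV V y s - m / 2)"
      using far y \<alpha>(1) by (intro mult_left_mono) auto
    then show ?thesis
      using next_le by (simp add: le_max_iff_disj)
  qed
qed

lemma practical_descent_if_SPSP:
  fixes A Xi :: "'a::euclidean_space set"
  assumes A: "A \<noteq> {}" and Xi: "closed Xi" and spsp: "SPSP Psi V A Xi"
    and bdd: "\<forall>\<sigma>>0. \<exists>B>0. \<forall>y\<in>Xi \<inter> cballS \<sigma> A. \<forall>s\<in>Psi y. norm s \<le> B"
    and desc: "uniform_projected_descent Xi A V"
  shows "\<exists>c. \<forall>L. \<exists>\<alpha>>0. \<exists>\<kappa>>0. practical_descent Xi Psi V c L \<alpha> \<kappa>"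
proof -
  obtain \<epsilon> b where \<epsilon>: "0 \<le> \<epsilon>" and b: "0 \<le> b"
    and near: "\<forall>y\<in>Xi \<inter> cballS \<epsilon> A. \<forall>s\<in>Psi y. - b \<le> dV V y s"
    and far: "\<forall>\<sigma>>\<epsilon>. \<exists>\<phi>::'a \<Rightarrow> real. continuous_on UNIV \<phi> \<and>
        (\<forall>y\<in>Xi \<inter> (cballS \<sigma> A - ballS \<epsilon> A). 0 < \<phi> y) \<and> rad_unb_on \<phi> A Xi \<and>
        (\<forall>y\<in>Xi \<inter> (cballS \<sigma> A - ballS \<epsilon> A). \<forall>s\<in>Psi y. \<phi> y \<le> dV V y s)"
    and A_cpt: "compact A" and rad: "rad_unb_on V A UNIV" and diff: "\<forall>y. V differentiable (at y)"
    using spsp unfolding SPSP_def by blast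
  have "continuous_on UNIV V"
    using diff by (meson continuous_at_imp_continuous_on differentiable_imp_continuous_within)
  then obtain M where M: "\<forall>x\<in>cballS (\<epsilon> + 1) A. V x \<le> M"
    using continuous_bounded_above_on_cballS[OF _ A A_cpt, of V "\<epsilon> + 1"] \<epsilon> by auto
  have "\<exists>\<alpha>>0. \<exists>\<kappa>>0. practical_descent Xi Psi V (M + 1/2) L \<alpha> \<kappa>" for L
  proof -
    obtain r where r: "0 < r" "\<forall>x. V x \<le> L \<longrightarrow> x \<in> cballS r A"
      using rad_unb_on_sublevel_subset_cballS[OF rad] by blast
    define R where "R = max r (\<epsilon> + 1)"
    have R: "\<epsilon> < R" "0 < R" and sublevel: "\<forall>x. V x \<le> L \<longrightarrow> x \<in> cballS R A"
      using \<epsilon> r cballS_mono[of r R A] unfolding R_def by auto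
    obtain B where B: "0 < B" "\<forall>y\<in>Xi \<inter> cballS R A. \<forall>s\<in>Psi y. norm s \<le> B"
      using bdd R(2) by blast
    obtain m where m: "0 < m" "\<forall>y\<in>Xi \<inter> (cballS R A - ballS \<epsilon> A). \<forall>s\<in>Psi y. m \<le> dV V y s"
      using far R(1) dV_uniform_lower_bound[OF Xi A A_cpt R(2)] by metis
    obtain \<alpha>0 where \<alpha>0: "0 < \<alpha>0" and step: "\<forall>y\<in>Xi \<inter> cballS R A. \<forall>s \<alpha>. norm s \<le> B \<longrightarrow> 0 < \<alpha> \<longrightarrow>
        \<alpha> \<le> \<alpha>0 \<longrightarrow> V (closest_point Xi (y - \<alpha> *\<^sub>R s)) \<le> V y - \<alpha> * (dV V y s - m / 2)"
      using desc[unfolded uniform_projected_descent_def, rule_format, OF B(1) half_gt_zero[OF m(1)], of R]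
      by blast
    define \<alpha> where "\<alpha> = min \<alpha>0 (1 / (2 * b + m))"
    have \<alpha>: "0 < \<alpha>" "\<alpha> \<le> \<alpha>0" "\<alpha> \<le> 1 / (2 * b + m)"
      using \<alpha>0 b m(1) by (simp_all add: \<alpha>_def)
    have "practical_descent Xi Psi V (M + 1/2) L \<alpha> (m / 2)"
    proof (rule practical_descent_of_first_order_step[where A = A and \<epsilon> = \<epsilon> and b = b])
      show "\<forall>y\<in>Xi. \<forall>s\<in>Psi y. V y \<le> L \<longrightarrow>
          V (closest_point Xi (y - \<alpha> *\<^sub>R s)) \<le> V y - \<alpha> * (dV V y s - m / 2)"
        using step B(2) sublevel \<alpha>(1,2) by blast
      show "\<forall>y\<in>Xi. \<forall>s\<in>Psi y. V y \<le> L \<longrightarrow> infdist y A \<le> \<epsilon> \<longrightarrow> - b \<le> dV V y s \<and> V y \<le> M"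
        using near M unfolding cballS_def by auto
      show "\<forall>y\<in>Xi. \<forall>s\<in>Psi y. V y \<le> L \<longrightarrow> \<epsilon> < infdist y A \<longrightarrow> m \<le> dV V y s"
        using m(2) sublevel unfolding ballS_def by auto
      show "\<alpha> * (2 * b + m) \<le> 1"
        using \<alpha>(3) b m(1) by (simp add: le_divide_eq)
    qed (use \<alpha> in auto)
    then show ?thesis
      using \<alpha>(1) m(1) half_gt_zero by blast
  qed
  then show ?thesis
    by blast
qed

lemma has_derivative_eq_of_touching_majorant:
  fixes V q :: "'a::real_normed_vector \<Rightarrow> real"
  assumes "(V has_derivative V') (at y)" "(q has_derivative q') (at y)"
    and "\<And>z. V z \<le> q z" "V y = q y"
  shows "V' = q'"
proof -
  have "((\<lambda>z. q z - V z) has_derivative (\<lambda>h. q' h - V' h)) (at y)"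
    using assms(1,2) by (rule has_derivative_diff[rotated])
  moreover have "\<forall>\<^sub>F z in at y. q y - V y \<le> q z - V z"
    using assms(3,4) by (simp add: eventually_at_filter)
  ultimately have "(\<lambda>h. q' h - V' h) = (\<lambda>h. 0)"
    by (rule has_derivative_local_min)
  then show ?thesis
    by (metis (no_types) eq_iff_diff_eq_0 ext)
qed

context
  fixes A :: "'a::euclidean_space set" and V :: "'a \<Rightarrow> real"
  assumes A: "closed A" "A \<noteq> {}"
    and V_eq: "\<And>y. V y = (1/2) * (norm (y - closest_point A y))\<^sup>2"
begin

lemma half_sq_dist_le: "a \<in> A \<Longrightarrow> V z \<le> (1/2) * (norm (z - a))\<^sup>2"
  using closest_point_le[OF A(1), of a z] by (simp add: V_eq dist_norm power_mono)

text \<open>\<open>V\<close> lies below the smooth function \<open>\<lambda>z. \<parallel>z - p\<parallel>\<^sup>2/2\<close> and touches it at \<open>y\<close>, so their derivatives agree.\<close>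

lemma dV_half_sq_dist:
  assumes "V differentiable (at y)"
  shows "dV V y s = (y - closest_point A y) \<bullet> s"
proof -
  define p where "p = closest_point A y"
  have "((\<lambda>z. (1/2) * ((z - p) \<bullet> (z - p))) has_derivative (\<lambda>h. (y - p) \<bullet> h)) (at y)"
    by (auto intro!: derivative_eq_intros simp: inner_commute algebra_simps)
  moreover have "\<And>z. V z \<le> (1/2) * ((z - p) \<bullet> (z - p))"
    using half_sq_dist_le closest_point_in_set[OF A] by (simp add: p_def power2_norm_eq_inner)
  moreover have "V y = (1/2) * ((y - p) \<bullet> (y - p))"
    by (simp add: V_eq p_def power2_norm_eq_inner)
  ultimately have "frechet_derivative V (at y) = (\<lambda>h. (y - p) \<bullet> h)"
    using has_derivative_eq_of_touching_majorant assms frechet_derivative_works by blast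
  then show ?thesis
    by (simp add: dV_def p_def)
qed

lemma half_sq_dist_closest_point_le:
  assumes Xi: "closed Xi" "convex Xi" "A \<subseteq> Xi"
  shows "V (closest_point Xi z) \<le> V z"
proof -
  define a where "a = closest_point A z"
  have a: "a \<in> A" "closest_point Xi a = a"
    using closest_point_in_set[OF A] closest_point_self Xi(3) unfolding a_def by blast+
  then have "norm (closest_point Xi z - a) \<le> norm (z - a)"
    using closest_point_lipschitz[OF Xi(2,1), of z a] A(2) Xi(3) by (auto simp: dist_norm)
  then show ?thesis
    using half_sq_dist_le[OF a(1), of "closest_point Xi z"] by (simp add: V_eq a_def power_mono)
qed

lemma uniform_projected_descent_half_sq_dist:
  assumes Xi: "closed Xi" "convex Xi" "A \<subseteq> Xi" and diff: "\<And>y. V differentiable (at y)"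
  shows "uniform_projected_descent Xi A V"
  unfolding uniform_projected_descent_def
proof (intro allI impI)
  fix R B \<theta> :: real assume "0 < B" "0 < \<theta>"
  have "V (closest_point Xi (y - \<alpha> *\<^sub>R s)) \<le> V y - \<alpha> * (dV V y s - \<theta>)"
    if "norm s \<le> B" "0 < \<alpha>" "\<alpha> \<le> 2 * \<theta> / B\<^sup>2" for y s \<alpha>
  proof -
    define g where "g = y - closest_point A y"
    have "\<alpha> * (norm s)\<^sup>2 \<le> \<alpha> * B\<^sup>2"
      using that(1,2) by (simp add: power_mono)
    also have "\<dots> \<le> 2 * \<theta>"
      using that(3) \<open>0 < B\<close> by (simp add: le_divide_eq)
    finally have quadratic: "(1/2) * \<alpha>\<^sup>2 * (norm s)\<^sup>2 \<le> \<alpha> * \<theta>"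
      using that(2) by (simp add: power2_eq_square mult_left_mono)
    have "V (closest_point Xi (y - \<alpha> *\<^sub>R s)) \<le> V (y - \<alpha> *\<^sub>R s)"
      by (rule half_sq_dist_closest_point_le[OF Xi])
    also have "\<dots> \<le> (1/2) * (norm (g - \<alpha> *\<^sub>R s))\<^sup>2"
      using half_sq_dist_le[OF closest_point_in_set[OF A, of y], where z = "y - \<alpha> *\<^sub>R s"]
      by (simp add: g_def algebra_simps)
    also have "\<dots> = (1/2) * (norm g)\<^sup>2 - \<alpha> * (g \<bullet> s) + (1/2) * \<alpha>\<^sup>2 * (norm s)\<^sup>2"
      using dot_norm_neg[of g "\<alpha> *\<^sub>R s"] by (simp add: power_mult_distrib algebra_simps)
    also have "\<dots> = V y - \<alpha> * (g \<bullet> s) + (1/2) * \<alpha>\<^sup>2 * (norm s)\<^sup>2"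
      by (simp add: V_eq g_def)
    finally have "V (closest_point Xi (y - \<alpha> *\<^sub>R s)) \<le> \<dots>" .
    moreover have "\<alpha> * (dV V y s - \<theta>) = \<alpha> * (g \<bullet> s) - \<alpha> * \<theta>"
      using dV_half_sq_dist[OF diff] by (simp add: g_def right_diff_distrib)
    ultimately show ?thesis
      using quadratic by linarith
  qed
  moreover have "0 < 2 * \<theta> / B\<^sup>2"
    using \<open>0 < B\<close> \<open>0 < \<theta>\<close> by simp
  ultimately show "\<exists>\<alpha>0>0. \<forall>y\<in>Xi \<inter> cballS R A. \<forall>s \<alpha>. norm s \<le> B \<longrightarrow> 0 < \<alpha> \<longrightarrow> \<alpha> \<le> \<alpha>0 \<longrightarrow>
      V (closest_point Xi (y - \<alpha> *\<^sub>R s)) \<le> V y - \<alpha> * (dV V y s - \<theta>)"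
    by blast
qed

end

lemma gradient_first_order_bound:
  fixes V :: "'a::euclidean_space \<Rightarrow> real"
  assumes grad: "\<And>x. (V has_derivative (\<lambda>h. g x \<bullet> h)) (at x)"
    and osc: "\<And>x. x \<in> cball y (norm h) \<Longrightarrow> norm (g x - g y) \<le> \<theta>"
  shows "V (y + h) \<le> V y + g y \<bullet> h + \<theta> * norm h"
proof -
  have osc': "onorm ((\<lambda>h. g x \<bullet> h) - (\<lambda>h. g y \<bullet> h)) \<le> \<theta>" if "x \<in> cball y (norm h)" for x
  proof -
    have "(\<lambda>h. g x \<bullet> h) - (\<lambda>h. g y \<bullet> h) = (\<lambda>h. (g x - g y) \<bullet> h)"
      by (auto simp: fun_diff_def inner_diff_left)
    moreover have "onorm (\<lambda>h. (g x - g y) \<bullet> h) \<le> norm (g x - g y)"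
      using onorm_inner_right[OF bounded_linear_ident, of "g x - g y"] by (simp add: onorm_id)
    ultimately show ?thesis
      using osc[OF that] by simp
  qed
  have segment: "y + t *\<^sub>R (y + h - y) \<in> cball y (norm h)" if "t \<in> {0..1}" for t
    using that by (simp add: dist_norm mult_left_le_one_le)
  have "norm (V (y + h) - V y - g y \<bullet> (y + h - y)) \<le> norm (y + h - y) * \<theta>"
    by (rule differentiable_bound_linearization[where f' = "\<lambda>x h. g x \<bullet> h", OF segment
          has_derivative_at_withinI[OF grad] osc']) simp_all
  then show ?thesis
    by (simp add: abs_le_iff mult.commute)
qed

lemma uniform_projected_descent_continuous_gradient:
  fixes A :: "'a::euclidean_space set"
  assumes A: "A \<noteq> {}" "compact A"
    and grad: "\<And>x. (V has_derivative (\<lambda>h. g x \<bullet> h)) (at x)" and g: "continuous_on UNIV g"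
  shows "uniform_projected_descent UNIV A V"
  unfolding uniform_projected_descent_def
proof (intro allI impI)
  fix R B \<theta> :: real assume "0 < B" "0 < \<theta>"
  define K where "K = cballS (\<bar>R\<bar> + 1) A"
  have "uniformly_continuous_on K g"
    using compact_uniformly_continuous[OF continuous_on_subset[OF g] compact_cballS[OF A]]
    by (simp add: K_def)
  then obtain d where d: "0 < d" "\<And>x x'. x \<in> K \<Longrightarrow> x' \<in> K \<Longrightarrow> dist x' x < d \<Longrightarrow> dist (g x') (g x) < \<theta> / B"
    unfolding uniformly_continuous_on_def using \<open>0 < B\<close> \<open>0 < \<theta>\<close> by (metis divide_pos_pos)
  define \<alpha>0 where "\<alpha>0 = min 1 (d / 2) / B"
  have "V (closest_point UNIV (y - \<alpha> *\<^sub>R s)) \<le> V y - \<alpha> * (dV V y s - \<theta>)"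
    if y: "y \<in> cballS R A" and s: "norm s \<le> B" and \<alpha>: "0 < \<alpha>" "\<alpha> \<le> \<alpha>0" for y s \<alpha>
  proof -
    have "\<alpha> * norm s \<le> \<alpha>0 * B"
      using s \<alpha> by (intro mult_mono) auto
    then have step: "norm (- (\<alpha> *\<^sub>R s)) \<le> min 1 (d / 2)"
      using \<open>0 < B\<close> \<alpha>(1) by (simp add: \<alpha>0_def)
    have "norm (g x - g y) \<le> \<theta> / B" if "x \<in> cball y (norm (- (\<alpha> *\<^sub>R s)))" for x
    proof -
      have "dist y x \<le> min 1 (d / 2)"
        using that step by simp
      moreover have "infdist x A \<le> infdist y A + dist y x"
        by (metis dist_commute infdist_triangle)
      ultimately have "y \<in> K" "x \<in> K"
        using y unfolding K_def cballS_def by auto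
      moreover have "dist x y < d"
        using \<open>dist y x \<le> min 1 (d / 2)\<close> d(1) by (simp add: dist_commute)
      ultimately show ?thesis
        using d(2)[of y x] by (simp add: dist_norm)
    qed
    then have "V (y + - (\<alpha> *\<^sub>R s)) \<le> V y + g y \<bullet> - (\<alpha> *\<^sub>R s) + \<theta> / B * norm (- (\<alpha> *\<^sub>R s))"
      by (rule gradient_first_order_bound[OF grad])
    then have "V (y - \<alpha> *\<^sub>R s) \<le> V y - \<alpha> * (g y \<bullet> s) + \<theta> / B * (\<alpha> * norm s)"
      using \<alpha>(1) by simp
    moreover have "\<theta> / B * (\<alpha> * norm s) \<le> \<alpha> * \<theta>"
      using s \<alpha>(1) \<open>0 < B\<close> \<open>0 < \<theta>\<close> by (simp add: field_simps mult_left_mono)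
    moreover have "dV V y s = g y \<bullet> s"
      using frechet_derivative_at[OF grad] by (simp add: dV_def)
    ultimately show ?thesis
      by (simp add: closest_point_self right_diff_distrib)
  qed
  moreover have "0 < \<alpha>0"
    using d(1) \<open>0 < B\<close> by (simp add: \<alpha>0_def)
  ultimately show "\<exists>\<alpha>0>0. \<forall>y\<in>UNIV \<inter> cballS R A. \<forall>s \<alpha>. norm s \<le> B \<longrightarrow> 0 < \<alpha> \<longrightarrow> \<alpha> \<le> \<alpha>0 \<longrightarrow>
      V (closest_point UNIV (y - \<alpha> *\<^sub>R s)) \<le> V y - \<alpha> * (dV V y s - \<theta>)"
    by blast
qed

lemma SPSP_subset: "SPSP Psi V A Xi \<Longrightarrow> A \<subseteq> Xi"
  unfolding SPSP_def strictly_contains_def by (meson centre_in_ball subsetD subsetI)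

lemma SPAS_if_SPSP_uniform_projected_descent:
  fixes A Xi :: "'a::euclidean_space set"
  assumes A: "A \<noteq> {}" and Xi: "closed Xi" and spsp: "SPSP Psi V A Xi"
    and bdd: "\<forall>\<sigma>>0. \<exists>B>0. \<forall>y\<in>Xi \<inter> cballS \<sigma> A. \<forall>s\<in>Psi y. norm s \<le> B"
    and desc: "uniform_projected_descent Xi A V"
  shows "SPAS Xi Psi A"
proof -
  obtain c where "\<forall>L. \<exists>\<alpha>>0. \<exists>\<kappa>>0. practical_descent Xi Psi V c L \<alpha> \<kappa>"
    using practical_descent_if_SPSP[OF A Xi spsp bdd desc] by blast
  moreover have "Xi \<noteq> {}"
    using SPSP_subset[OF spsp] A by blast
  moreover have "continuous_on UNIV V" "compact A" "rad_unb_on V A UNIV"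
    using spsp unfolding SPSP_def
    by (auto intro: continuous_at_imp_continuous_on differentiable_imp_continuous_within)
  ultimately show ?thesis
    using SPAS_if_practical_descent[OF Xi _ A] by blast
qed

theorem theorem2:
  fixes A Xi :: "'a::euclidean_space set"
    and V :: "'a \<Rightarrow> real"
    and Psi :: "'a \<Rightarrow> 'a set"
  assumes A_ne: "A \<noteq> {}" and A_cpt: "compact A"
    and V_nonneg: "\<forall>y. V y \<ge> 0"
    and settings:
      "(Xi \<noteq> {} \<and> closed Xi \<and> convex Xi \<and> convex A \<and>
          (\<forall>y. V y = (1/2) * (norm (y - closest_point A y))\<^sup>2))
       \<or> (Xi = UNIV \<and>
          (\<exists>g::'a \<Rightarrow> 'a. (\<forall>y. (V has_derivative (\<lambda>h. g y \<bullet> h)) (at y)) \<and> continuous_on UNIV g \<and>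
              (\<forall>x. \<exists>e>0. \<exists>L. lipschitz_on L (ball x e) g)) \<and>
          pos_def_wrt V A \<and> rad_unb_on V A UNIV)"
    and spsp: "SPSP Psi V A Xi"
    and bdd: "\<forall>\<sigma>>0. \<exists>B>0. \<forall>y\<in>Xi \<inter> cballS \<sigma> A. \<forall>s\<in>Psi y. norm s \<le> B"
  shows "SPAS Xi Psi A"
  using settings
proof
  \<comment> \<open>differentiability of \<open>V\<close> is part of SPSP\<close>
  assume "Xi \<noteq> {} \<and> closed Xi \<and> convex Xi \<and> convex A \<and>
    (\<forall>y. V y = (1/2) * (norm (y - closest_point A y))\<^sup>2)"
  moreover have "\<And>y. V differentiable (at y)"
    using spsp unfolding SPSP_def by blast
  ultimately have "closed Xi" "uniform_projected_descent Xi A V"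
    using uniform_projected_descent_half_sq_dist[OF compact_imp_closed[OF A_cpt] A_ne]
      SPSP_subset[OF spsp] by auto
  then show ?thesis
    using SPAS_if_SPSP_uniform_projected_descent[OF A_ne _ spsp bdd] by blast
next
  assume "Xi = UNIV \<and>
    (\<exists>g::'a \<Rightarrow> 'a. (\<forall>y. (V has_derivative (\<lambda>h. g y \<bullet> h)) (at y)) \<and> continuous_on UNIV g \<and>
      (\<forall>x. \<exists>e>0. \<exists>L. lipschitz_on L (ball x e) g)) \<and> pos_def_wrt V A \<and> rad_unb_on V A UNIV"
  then have "uniform_projected_descent UNIV A V" "Xi = UNIV"
    using uniform_projected_descent_continuous_gradient[OF A_ne A_cpt] by blast+
  then show ?thesis
    using SPAS_if_SPSP_uniform_projected_descent[OF A_ne _ spsp bdd] by simp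
qed

end
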